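(* Let $\Phi:\mathbb{R}^2\to\mathbb{R}^2$ be a jacobian map of the form $\Phi(x,y)=(x+p(x,y),\,y+q(x,y))$, with $p,q$ real polynomials, $o(p)>1$, $o(q)>1$. Suppose one of the following holds: (i) $p$ is $x$-even and $q$ is $x$-odd; (ii) $p$ is $y$-odd and $q$ is $y$-even. Then $\Phi$ is a shear map.
   Context: A jacobian map is a real polynomial map $\Phi:\mathbb{R}^2\to\mathbb{R}^2$ whose jacobian determinant $\det J_\Phi$ is a non-zero constant. For a polynomial $P$, $o(P)$ is its order (lowest degree of a monomial appearing in $P$). A polynomial is $x$-even if it contains only monomials with even powers of $x$ (including $x^0$), $x$-odd if it contains only monomials with odd powers of $x$; $y$-even and $y$-odd are defined analogously. A polynomial map is a shear map if its nonlinear terms are linear combinations of powers of a single homogeneous polynomial of degree 1, i.e. there is a linear form $\ell(x,y)$ such that each component of the map, after removing its terms of degree $\le 1$, is a real linear combination of $\ell^i$, $i\ge 2$. *)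

theory Defs
  imports Complex_Main
begin

text \<open>A real polynomial in two variables x, y is represented by its coefficient
  function c :: nat \<times> nat \<Rightarrow> real, where c (i,j) is the coefficient of x^i y^j;
  only finitely many coefficients are non-zero.\<close>

type_synonym bpoly = "nat \<times> nat \<Rightarrow> real"

definition is_bpoly :: "bpoly \<Rightarrow> bool" where
  "is_bpoly c \<longleftrightarrow> finite {m. c m \<noteq> 0}"

definition beval :: "bpoly \<Rightarrow> real \<Rightarrow> real \<Rightarrow> real" where
  "beval c x y = (\<Sum>m\<in>{m. c m \<noteq> 0}. c m * x ^ fst m * y ^ snd m)"

definition bdx :: "bpoly \<Rightarrow> bpoly" where
  "bdx c = (\<lambda>(i,j). real (i+1) * c (i+1, j))"

definition bdy :: "bpoly \<Rightarrow> bpoly" where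
  "bdy c = (\<lambda>(i,j). real (j+1) * c (i, j+1))"

definition jacobian_map :: "bpoly \<Rightarrow> bpoly \<Rightarrow> bool" where
  "jacobian_map F G \<longleftrightarrow> is_bpoly F \<and> is_bpoly G \<and>
     (\<exists>k. k \<noteq> 0 \<and> (\<forall>x y. beval (bdx F) x y * beval (bdy G) x y
                          - beval (bdy F) x y * beval (bdx G) x y = k))"

definition order_gt_1 :: "bpoly \<Rightarrow> bool" where
  "order_gt_1 c \<longleftrightarrow> (\<forall>i j. c (i,j) \<noteq> 0 \<longrightarrow> i + j \<ge> 2)"

definition x_even :: "bpoly \<Rightarrow> bool" where
  "x_even c \<longleftrightarrow> (\<forall>i j. c (i,j) \<noteq> 0 \<longrightarrow> even i)"
definition x_odd :: "bpoly \<Rightarrow> bool" where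
  "x_odd c \<longleftrightarrow> (\<forall>i j. c (i,j) \<noteq> 0 \<longrightarrow> odd i)"
definition y_even :: "bpoly \<Rightarrow> bool" where
  "y_even c \<longleftrightarrow> (\<forall>i j. c (i,j) \<noteq> 0 \<longrightarrow> even j)"
definition y_odd :: "bpoly \<Rightarrow> bool" where
  "y_odd c \<longleftrightarrow> (\<forall>i j. c (i,j) \<noteq> 0 \<longrightarrow> odd j)"

definition nonlin :: "bpoly \<Rightarrow> bpoly" where
  "nonlin c = (\<lambda>(i,j). if i + j \<ge> 2 then c (i,j) else 0)"

definition shear_map :: "bpoly \<Rightarrow> bpoly \<Rightarrow> bool" where
  "shear_map F G \<longleftrightarrow> (\<exists>a b. (a, b) \<noteq> (0::real, 0::real) \<and>
     (\<exists>N (\<alpha>::nat \<Rightarrow> real) (\<beta>::nat \<Rightarrow> real). \<forall>x y.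
        beval (nonlin F) x y = (\<Sum>i\<in>{2..N}. \<alpha> i * (a*x + b*y) ^ i) \<and>
        beval (nonlin G) x y = (\<Sum>i\<in>{2..N}. \<beta> i * (a*x + b*y) ^ i)))"

definition plus_x :: "bpoly \<Rightarrow> bpoly" where
  "plus_x p = (\<lambda>m. p m + (if m = (1,0) then 1 else 0))"
definition plus_y :: "bpoly \<Rightarrow> bpoly" where
  "plus_y q = (\<lambda>m. q m + (if m = (0,1) then 1 else 0))"

end

theory Submission
  imports Defs "HOL-Computational_Algebra.Polynomial"
begin

text \<open>Exchanging x and y turns case (ii) into case (i), so let p be x-even and q x-odd.
  Then x \<mapsto> -x changes the signs of p_x and q_y but not those of p_y and q_x, and comparing
  the jacobian identity (1 + p_x)(1 + q_y) - p_y q_x = 1 at (x,y) and at (-x,y) shows that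
  the jacobian matrix of (p,q) is nilpotent: p_x + q_y = 0 and p_x^2 + p_y q_x = 0.
  Write p = \<Sum> P_j(x) y^j with y-degree n. A descending induction on j, comparing the
  coefficients of y^(n+j) in the second identity, shows that every P_j is constant: the top
  one because (n+1) f'^2 = n f f'' forces f' = 0, the others because P_j'' = 0 while P_j,
  being even, has no linear term. Hence p_x = q_y = p_y q_x = 0, so one of p, q vanishes and
  the other depends on a single variable, which makes the map a shear.\<close>

section \<open>Nilpotent jacobian matrices of bivariate polynomials\<close>

lemma pderiv_eq_0_if_pderiv_pderiv_eq_0:
  fixes f :: "'a::{idom,ring_char_0} poly"
  assumes "pderiv (pderiv f) = 0" and "coeff f 1 = 0"
  shows "pderiv f = 0"
proof (rule poly_eqI)
  fix i
  show "coeff (pderiv f) i = coeff 0 i"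
  proof (cases i)
    case 0
    then show ?thesis
      using assms(2) by (simp add: coeff_pderiv)
  next
    case (Suc k)
    have "coeff (pderiv (pderiv f)) k = 0"
      using assms(1) by simp
    then show ?thesis
      using Suc by (simp add: coeff_pderiv del: of_nat_Suc)
  qed
qed

lemma coeff_square_pderiv_top:
  fixes f :: "'a::{idom,ring_char_0} poly"
  shows "coeff (pderiv f * pderiv f) (2 * (degree f - 1))
       = of_nat (degree f * degree f) * (lead_coeff f * lead_coeff f)"
proof (cases "degree f = 0")
  case True
  then show ?thesis
    by (simp add: pderiv_eq_0_iff[THEN iffD2])
next
  case False
  then have "coeff (pderiv f) (degree (pderiv f)) = of_nat (degree f) * lead_coeff f"
    by (simp add: degree_pderiv coeff_pderiv)
  then show ?thesis
    using coeff_mult_degree_sum[of "pderiv f" "pderiv f"]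
    by (simp add: degree_pderiv mult_2 mult_ac)
qed

lemma coeff_mult_second_pderiv_top:
  fixes f :: "'a::{idom,ring_char_0} poly"
  shows "coeff (f * pderiv (pderiv f)) (2 * (degree f - 1))
       = of_nat ((degree f - 1) * degree f) * (lead_coeff f * lead_coeff f)"
proof (cases "degree f \<le> 1")
  case True
  then have "pderiv (pderiv f) = 0"
    by (simp add: pderiv_eq_0_iff degree_pderiv)
  then show ?thesis
    using True by (cases "degree f") simp_all
next
  case False
  then have "degree (pderiv (pderiv f)) = degree f - 2"
    and "coeff (pderiv (pderiv f)) (degree f - 2) = of_nat (degree f - 1) * (of_nat (degree f) * lead_coeff f)"
    by (simp_all add: degree_pderiv coeff_pderiv Suc_diff_Suc numeral_2_eq_2)
  moreover have "2 * (degree f - 1) = degree f + (degree f - 2)"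
    using False by simp
  ultimately show ?thesis
    using coeff_mult_degree_sum[of f "pderiv (pderiv f)"] by (simp add: mult_ac)
qed

lemma pderiv_eq_0_if_sq_pderiv_eq:
  fixes f :: "'a::{idom,ring_char_0} poly"
  assumes eq: "smult (of_nat (Suc n)) (pderiv f * pderiv f) = smult (of_nat n) (f * pderiv (pderiv f))"
  shows "pderiv f = 0"
proof (rule ccontr)
  assume "pderiv f \<noteq> 0"
  define e where "e = degree f"
  define L where "L = lead_coeff f"
  have "e \<ge> 1" and "L \<noteq> 0"
    using \<open>pderiv f \<noteq> 0\<close> by (auto simp: e_def L_def pderiv_eq_0_iff)
  have "of_nat (Suc n) * (of_nat (e * e) * (L * L)) = of_nat n * (of_nat ((e - 1) * e) * (L * L))"
    using arg_cong[OF eq, of "\<lambda>g. coeff g (2 * (e - 1))"]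
    by (simp only: coeff_smult coeff_square_pderiv_top coeff_mult_second_pderiv_top e_def L_def)
  then have "of_nat (Suc n * (e * e)) * (L * L) = (of_nat (n * ((e - 1) * e)) * (L * L) :: 'a)"
    unfolding mult.assoc[symmetric] of_nat_mult[symmetric] .
  then have "(of_nat (Suc n * (e * e)) :: 'a) = of_nat (n * ((e - 1) * e))"
    using \<open>L \<noteq> 0\<close> mult_right_cancel[of "L * L"] by simp
  then have "Suc n * (e * e) = n * ((e - 1) * e)"
    by (simp only: of_nat_eq_iff)
  moreover have "n * ((e - 1) * e) \<le> n * (e * e)"
    by simp
  moreover have "n * (e * e) < Suc n * (e * e)"
    using \<open>e \<ge> 1\<close> by simp
  ultimately show False
    by linarith
qed

lemma coeff_map_poly_pderiv: "coeff (map_poly pderiv R) j = pderiv (coeff R j)"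
  by (simp add: coeff_map_poly)

lemma coeff_pderiv_poly:
  fixes R :: "'a::{comm_semiring_1,semiring_no_zero_divisors} poly poly"
  shows "coeff (pderiv R) j = smult (of_nat (Suc j)) (coeff R (Suc j))"
  by (simp add: coeff_pderiv of_nat_poly)

lemma pderiv_coeff_Suc_if_trace_eq_0:
  fixes P Q :: "'a::{idom,ring_char_0} poly poly"
  assumes "map_poly pderiv P + pderiv Q = 0"
  shows "smult (of_nat (Suc j)) (pderiv (coeff Q (Suc j))) = - pderiv (pderiv (coeff P j))"
proof -
  have "pderiv (coeff P j) + smult (of_nat (Suc j)) (coeff Q (Suc j)) = 0"
    using arg_cong[OF assms, of "\<lambda>R. coeff R j"]
    by (simp only: coeff_add coeff_map_poly_pderiv coeff_pderiv_poly coeff_0)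
  then have "pderiv (pderiv (coeff P j) + smult (of_nat (Suc j)) (coeff Q (Suc j))) = 0"
    by simp
  then show ?thesis
    by (simp add: pderiv_add pderiv_smult eq_neg_iff_add_eq_0 add.commute)
qed

lemma coeff_map_pderiv_square_above_degree:
  fixes P :: "'a::{idom,ring_char_0} poly poly"
  assumes above: "\<And>j. k < j \<Longrightarrow> pderiv (coeff P j) = 0"
  shows "coeff (map_poly pderiv P * map_poly pderiv P) (degree P + k)
       = pderiv (coeff P k) * pderiv (lead_coeff P)"
proof -
  let ?n = "degree P"
  have "(\<Sum>i\<le>?n+k. pderiv (coeff P i) * pderiv (coeff P (?n+k-i)))
      = (\<Sum>i\<in>{k}. pderiv (coeff P i) * pderiv (coeff P (?n+k-i)))"
  proof (rule sum.mono_neutral_right)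
    show "\<forall>i\<in>{..?n+k} - {k}. pderiv (coeff P i) * pderiv (coeff P (?n+k-i)) = 0"
    proof
      fix i
      assume "i \<in> {..?n+k} - {k}"
      then have "k < i \<or> ?n < ?n + k - i"
        by auto
      then show "pderiv (coeff P i) * pderiv (coeff P (?n+k-i)) = 0"
        by (metis above coeff_eq_0 mult_zero_left mult_zero_right pderiv_0)
    qed
  qed auto
  then show ?thesis
    by (simp add: coeff_mult coeff_map_poly_pderiv)
qed

lemma coeff_pderiv_mult_map_pderiv_above_degree:
  fixes P Q :: "'a::{idom,ring_char_0} poly poly"
  assumes above: "\<And>j. k < j \<Longrightarrow> pderiv (coeff Q (Suc j)) = 0"
  shows "coeff (pderiv P * map_poly pderiv Q) (degree P + k)
       = smult (of_nat (degree P)) (lead_coeff P) * pderiv (coeff Q (Suc k))"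
proof (cases "degree P = 0")
  case True
  then show ?thesis
    by (simp add: coeff_mult coeff_pderiv_poly coeff_eq_0)
next
  case False
  let ?n = "degree P"
  let ?term = "\<lambda>i. smult (of_nat (Suc i)) (coeff P (Suc i)) * pderiv (coeff Q (?n+k-i))"
  have "sum ?term {..?n+k} = sum ?term {?n-1}"
  proof (rule sum.mono_neutral_right)
    show "\<forall>i\<in>{..?n+k} - {?n-1}. ?term i = 0"
    proof
      fix i
      assume "i \<in> {..?n+k} - {?n-1}"
      then have "?n < Suc i \<or> (?n + k - i = Suc (?n + k - i - 1) \<and> k < ?n + k - i - 1)"
        by auto
      then show "?term i = 0"
        using above coeff_eq_0 by (metis mult_zero_left mult_zero_right smult_0_right)
    qed
  qed (use False in auto)
  then show ?thesis
    using False by (simp add: coeff_mult coeff_map_poly_pderiv coeff_pderiv_poly Suc_diff_Suc)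
qed

text \<open>The coefficient of y^(n+k), n the y-degree of P, in the determinant identity, with Q
  eliminated through the trace identity.\<close>

lemma nilpotent_jacobian_coeff_relation:
  fixes P Q :: "'a::{idom,ring_char_0} poly poly"
  assumes trace: "map_poly pderiv P + pderiv Q = 0"
    and det: "map_poly pderiv P * map_poly pderiv P + pderiv P * map_poly pderiv Q = 0"
    and above: "\<And>j. k < j \<Longrightarrow> pderiv (coeff P j) = 0"
  shows "smult (of_nat (Suc k)) (pderiv (coeff P k) * pderiv (lead_coeff P))
       = smult (of_nat (degree P)) (lead_coeff P * pderiv (pderiv (coeff P k)))"
proof -
  have "pderiv (coeff Q (Suc j)) = 0" if "k < j" for j
    using pderiv_coeff_Suc_if_trace_eq_0[OF trace, of j] above[OF that] by (simp del: of_nat_Suc)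
  then have "pderiv (coeff P k) * pderiv (lead_coeff P)
      + smult (of_nat (degree P)) (lead_coeff P) * pderiv (coeff Q (Suc k)) = 0"
    using arg_cong[OF det, of "\<lambda>R. coeff R (degree P + k)"] above
    by (simp add: coeff_map_pderiv_square_above_degree coeff_pderiv_mult_map_pderiv_above_degree)
  then have "smult (of_nat (Suc k)) (pderiv (coeff P k) * pderiv (lead_coeff P))
      + smult (of_nat (degree P)) (lead_coeff P) * smult (of_nat (Suc k)) (pderiv (coeff Q (Suc k))) = 0"
    by (metis mult_smult_right smult_add_right smult_0_right)
  then show ?thesis
    unfolding pderiv_coeff_Suc_if_trace_eq_0[OF trace]
    by (simp add: eq_neg_iff_add_eq_0 mult_smult_left)
qed

lemma pderiv_coeff_eq_0_if_nilpotent_jacobian: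
  fixes P Q :: "'a::{idom,ring_char_0} poly poly"
  assumes trace: "map_poly pderiv P + pderiv Q = 0"
    and det: "map_poly pderiv P * map_poly pderiv P + pderiv P * map_poly pderiv Q = 0"
    and no_linear: "coeff (coeff P k) 1 = 0"
    and "k \<le> degree P" and above: "\<And>j. k < j \<Longrightarrow> pderiv (coeff P j) = 0"
  shows "pderiv (coeff P k) = 0"
proof (cases "k = degree P")
  case True
  have "smult (of_nat (Suc k)) (pderiv (coeff P k) * pderiv (coeff P k))
      = smult (of_nat k) (coeff P k * pderiv (pderiv (coeff P k)))"
    using nilpotent_jacobian_coeff_relation[OF trace det above] unfolding True .
  then show ?thesis
    by (rule pderiv_eq_0_if_sq_pderiv_eq)
next
  case False
  then have "k < degree P"
    using \<open>k \<le> degree P\<close> by simp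
  then have "lead_coeff P \<noteq> 0"
    by auto
  moreover have "smult (of_nat (degree P)) (lead_coeff P * pderiv (pderiv (coeff P k))) = 0"
    using nilpotent_jacobian_coeff_relation[OF trace det above] above[OF \<open>k < degree P\<close>] by simp
  ultimately have "pderiv (pderiv (coeff P k)) = 0"
    using \<open>k < degree P\<close> by simp
  then show ?thesis
    using no_linear pderiv_eq_0_if_pderiv_pderiv_eq_0 by blast
qed

lemma map_poly_pderiv_eq_0_if_nilpotent_jacobian:
  fixes P Q :: "'a::{idom,ring_char_0} poly poly"
  assumes trace: "map_poly pderiv P + pderiv Q = 0"
    and det: "map_poly pderiv P * map_poly pderiv P + pderiv P * map_poly pderiv Q = 0"
    and no_linear: "\<And>j. coeff (coeff P j) 1 = 0"
  shows "map_poly pderiv P = 0"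
proof -
  have vanish: "\<forall>j\<ge>k. pderiv (coeff P j) = 0" if "k \<le> Suc (degree P)" for k
    using that
  proof (induction k rule: inc_induct)
    case base
    then show ?case
      by (simp add: coeff_eq_0)
  next
    case (step k)
    then have above: "\<And>j. k < j \<Longrightarrow> pderiv (coeff P j) = 0"
      by auto
    have "k \<le> degree P"
      using step.hyps by simp
    then have "pderiv (coeff P k) = 0"
      using pderiv_coeff_eq_0_if_nilpotent_jacobian[OF trace det no_linear _ above] by blast
    with above show ?case
      using le_neq_implies_less by blast
  qed
  show ?thesis
    by (intro poly_eqI) (simp add: coeff_map_poly_pderiv vanish[of 0])
qed

lemma coeff_poly_const_poly:
  fixes R :: "'a::comm_semiring_1 poly poly"
  shows "coeff (poly R [:y:]) i = poly (map_poly (\<lambda>r. coeff r i) R) y"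
proof (induction R)
  case (pCons a R)
  have "coeff (poly (pCons a R) [:y:]) i = coeff a i + y * coeff (poly R [:y:]) i"
    by simp
  then show ?case
    using pCons by (simp add: map_poly_pCons)
qed simp

lemma poly_poly_const_eq_0_imp_eq_0:
  fixes R :: "'a::{idom,ring_char_0} poly poly"
  assumes "\<And>x y. poly (poly R [:y:]) x = 0"
  shows "R = 0"
proof -
  have "poly R [:y:] = 0" for y
    using assms poly_all_0_iff_0 by blast
  then have "map_poly (\<lambda>r. coeff r i) R = 0" for i
    using poly_all_0_iff_0 coeff_poly_const_poly by (metis coeff_0)
  then have "coeff (coeff R j) i = 0" for i j
    by (metis coeff_0 coeff_map_poly)
  then show ?thesis
    by (metis leading_coeff_0_iff poly_eqI coeff_0)
qed

section \<open>Coefficient functions of bivariate polynomials\<close>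

lemma beval_eq_sum_superset:
  assumes "finite T" "{m. c m \<noteq> 0} \<subseteq> T"
  shows "beval c x y = (\<Sum>m\<in>T. c m * x ^ fst m * y ^ snd m)"
  unfolding beval_def by (rule sum.mono_neutral_left) (use assms in auto)

lemma beval_add:
  assumes "is_bpoly c" "is_bpoly d"
  shows "beval (\<lambda>m. c m + d m) x y = beval c x y + beval d x y"
proof -
  let ?T = "{m. c m \<noteq> 0} \<union> {m. d m \<noteq> 0}"
  have T: "finite ?T"
    using assms by (simp add: is_bpoly_def)
  have "beval (\<lambda>m. c m + d m) x y = (\<Sum>m\<in>?T. (c m + d m) * x ^ fst m * y ^ snd m)"
    by (rule beval_eq_sum_superset[OF T]) auto
  also have "\<dots> = (\<Sum>m\<in>?T. c m * x ^ fst m * y ^ snd m) + (\<Sum>m\<in>?T. d m * x ^ fst m * y ^ snd m)"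
    by (simp add: distrib_right sum.distrib)
  also have "\<dots> = beval c x y + beval d x y"
    using beval_eq_sum_superset[OF T, of c] beval_eq_sum_superset[OF T, of d] by auto
  finally show ?thesis .
qed

lemma beval_origin:
  assumes "is_bpoly c"
  shows "beval c 0 0 = c (0,0)"
proof -
  let ?T = "insert (0,0) {m. c m \<noteq> 0}"
  have T: "finite ?T"
    using assms by (simp add: is_bpoly_def)
  have "beval c 0 0 = (\<Sum>m\<in>?T. c m * 0 ^ fst m * 0 ^ snd m)"
    by (rule beval_eq_sum_superset[OF T]) auto
  also have "\<dots> = (\<Sum>m\<in>?T. if m = (0,0) then c m else 0)"
    by (rule sum.cong) (auto simp: zero_power)
  finally show ?thesis
    using T by simp
qed

lemma beval_const_1: "beval (\<lambda>m. if m = (0,0) then 1 else 0) x y = 1"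
proof -
  have "{m. (if m = (0,0) then 1 else 0::real) \<noteq> 0} = {(0,0)}"
    by auto
  then show ?thesis
    by (simp add: beval_def)
qed

lemma is_bpoly_const_1: "is_bpoly (\<lambda>m. if m = (0,0) then 1 else 0)"
  by (simp add: is_bpoly_def)

lemma is_bpoly_bdx: "is_bpoly c \<Longrightarrow> is_bpoly (bdx c)"
proof -
  assume "is_bpoly c"
  moreover have "{m. bdx c m \<noteq> 0} \<subseteq> (\<lambda>(i,j). (i - 1, j)) ` {m. c m \<noteq> 0}"
    by (force simp: bdx_def intro: image_eqI[where x="(Suc _, _)"])
  ultimately show ?thesis
    unfolding is_bpoly_def by (meson finite_imageI finite_subset)
qed

lemma is_bpoly_bdy: "is_bpoly c \<Longrightarrow> is_bpoly (bdy c)"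
proof -
  assume "is_bpoly c"
  moreover have "{m. bdy c m \<noteq> 0} \<subseteq> (\<lambda>(i,j). (i, j - 1)) ` {m. c m \<noteq> 0}"
    by (force simp: bdy_def intro: image_eqI[where x="(_, Suc _)"])
  ultimately show ?thesis
    unfolding is_bpoly_def by (meson finite_imageI finite_subset)
qed

lemma beval_bdx_origin: "is_bpoly c \<Longrightarrow> beval (bdx c) 0 0 = c (1,0)"
  using beval_origin[OF is_bpoly_bdx] by (simp add: bdx_def)

lemma beval_bdy_origin: "is_bpoly c \<Longrightarrow> beval (bdy c) 0 0 = c (0,1)"
  using beval_origin[OF is_bpoly_bdy] by (simp add: bdy_def)

lemma beval_bdx_plus_x:
  assumes "is_bpoly p"
  shows "beval (bdx (plus_x p)) x y = beval (bdx p) x y + 1"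
proof -
  have "bdx (plus_x p) = (\<lambda>m. bdx p m + (if m = (0,0) then 1 else 0))"
    by (auto simp: bdx_def plus_x_def fun_eq_iff)
  then show ?thesis
    using assms by (simp add: beval_add is_bpoly_bdx is_bpoly_const_1 beval_const_1)
qed

lemma beval_bdy_plus_y:
  assumes "is_bpoly q"
  shows "beval (bdy (plus_y q)) x y = beval (bdy q) x y + 1"
proof -
  have "bdy (plus_y q) = (\<lambda>m. bdy q m + (if m = (0,0) then 1 else 0))"
    by (auto simp: bdy_def plus_y_def fun_eq_iff)
  then show ?thesis
    using assms by (simp add: beval_add is_bpoly_bdy is_bpoly_const_1 beval_const_1)
qed

lemma bdy_plus_x: "bdy (plus_x p) = bdy p"
  by (auto simp: bdy_def plus_x_def fun_eq_iff)

lemma bdx_plus_y: "bdx (plus_y q) = bdx q"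
  by (auto simp: bdx_def plus_y_def fun_eq_iff)

lemma order_gt_1D: "order_gt_1 c \<Longrightarrow> i + j < 2 \<Longrightarrow> c (i,j) = 0"
  unfolding order_gt_1_def by (meson not_le)

lemma jacobian_plus_xy_eq_1:
  assumes p: "is_bpoly p" "order_gt_1 p" and q: "is_bpoly q" "order_gt_1 q"
    and "jacobian_map (plus_x p) (plus_y q)"
  shows "(beval (bdx p) x y + 1) * (beval (bdy q) x y + 1)
           - beval (bdy p) x y * beval (bdx q) x y = 1"
proof -
  obtain k where k: "\<And>x y. (beval (bdx p) x y + 1) * (beval (bdy q) x y + 1)
                             - beval (bdy p) x y * beval (bdx q) x y = k"
    using assms unfolding jacobian_map_def
    by (auto simp: beval_bdx_plus_x beval_bdy_plus_y bdy_plus_x bdx_plus_y)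
  have "k = 1"
    using k[of 0 0] order_gt_1D[OF p(2), of 1 0] order_gt_1D[OF p(2), of 0 1]
      order_gt_1D[OF q(2), of 1 0] order_gt_1D[OF q(2), of 0 1]
    by (simp add: beval_bdx_origin beval_bdy_origin p q)
  with k show ?thesis
    by simp
qed

section \<open>Exchanging the variables\<close>

definition btranspose :: "bpoly \<Rightarrow> bpoly" where
  "btranspose c = (\<lambda>(i,j). c (j,i))"

lemma btranspose_btranspose [simp]: "btranspose (btranspose c) = c"
  by (simp add: btranspose_def fun_eq_iff)

lemma btranspose_zero [simp]: "btranspose (\<lambda>_. 0) = (\<lambda>_. 0)"
  by (simp add: btranspose_def fun_eq_iff)

lemma support_btranspose: "{m. btranspose c m \<noteq> 0} = prod.swap ` {m. c m \<noteq> 0}"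
  by (auto simp: btranspose_def image_iff)

lemma is_bpoly_btranspose: "is_bpoly (btranspose c) \<longleftrightarrow> is_bpoly c"
  by (simp add: is_bpoly_def support_btranspose finite_image_iff)

lemma beval_btranspose: "beval (btranspose c) x y = beval c y x"
  unfolding beval_def support_btranspose
  by (subst sum.reindex) (auto simp: btranspose_def mult_ac)

lemma bdx_btranspose: "bdx (btranspose c) = btranspose (bdy c)"
  by (auto simp: bdx_def bdy_def btranspose_def fun_eq_iff)

lemma bdy_btranspose: "bdy (btranspose c) = btranspose (bdx c)"
  by (auto simp: bdx_def bdy_def btranspose_def fun_eq_iff)

lemma plus_x_btranspose: "plus_x (btranspose c) = btranspose (plus_y c)"
  by (auto simp: plus_x_def plus_y_def btranspose_def fun_eq_iff)

lemma plus_y_btranspose: "plus_y (btranspose c) = btranspose (plus_x c)"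
  by (auto simp: plus_x_def plus_y_def btranspose_def fun_eq_iff)

lemma nonlin_btranspose: "nonlin (btranspose c) = btranspose (nonlin c)"
  by (auto simp: nonlin_def btranspose_def fun_eq_iff add.commute)

lemma order_gt_1_btranspose: "order_gt_1 (btranspose c) \<longleftrightarrow> order_gt_1 c"
  unfolding order_gt_1_def btranspose_def by (simp, metis add.commute)

lemma x_even_btranspose: "x_even (btranspose c) \<longleftrightarrow> y_even c"
  by (auto simp: x_even_def y_even_def btranspose_def)

lemma x_odd_btranspose: "x_odd (btranspose c) \<longleftrightarrow> y_odd c"
  by (auto simp: x_odd_def y_odd_def btranspose_def)

lemma jacobian_map_btranspose:
  assumes "jacobian_map F G"
  shows "jacobian_map (btranspose G) (btranspose F)"
proof -
  obtain k where "k \<noteq> 0" and k: "\<And>x y. beval (bdx F) x y * beval (bdy G) x y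
                                     - beval (bdy F) x y * beval (bdx G) x y = k"
    using assms unfolding jacobian_map_def by blast
  have "beval (bdx (btranspose G)) x y * beval (bdy (btranspose F)) x y
          - beval (bdy (btranspose G)) x y * beval (bdx (btranspose F)) x y = k" for x y
    using k[of y x] by (simp add: bdx_btranspose bdy_btranspose beval_btranspose mult.commute)
  with \<open>k \<noteq> 0\<close> assms show ?thesis
    unfolding jacobian_map_def is_bpoly_btranspose by blast
qed

lemma shear_map_btranspose:
  assumes "shear_map F G"
  shows "shear_map (btranspose G) (btranspose F)"
proof -
  obtain a b N \<alpha> \<beta> where ab: "(a, b) \<noteq> (0, 0)"
    and F: "\<And>x y. beval (nonlin F) x y = (\<Sum>i\<in>{2..N}. \<alpha> i * (a*x + b*y) ^ i)"
    and G: "\<And>x y. beval (nonlin G) x y = (\<Sum>i\<in>{2..N}. \<beta> i * (a*x + b*y) ^ i)"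
    using assms unfolding shear_map_def by blast
  show ?thesis
    unfolding shear_map_def nonlin_btranspose beval_btranspose
  proof (intro exI conjI allI)
    show "(b, a) \<noteq> (0, 0)"
      using ab by auto
    show "beval (nonlin G) y x = (\<Sum>i\<in>{2..N}. \<beta> i * (b*x + a*y) ^ i)"
     and "beval (nonlin F) y x = (\<Sum>i\<in>{2..N}. \<alpha> i * (b*x + a*y) ^ i)" for x y
      using F[of y x] G[of y x] by (simp_all add: add.commute)
  qed
qed

section \<open>The case of an x-even p and an x-odd q\<close>

lemma beval_neg_x_if_x_even: "x_even c \<Longrightarrow> beval c (-x) y = beval c x y"
  unfolding beval_def x_even_def by (rule sum.cong) auto

lemma beval_neg_x_if_x_odd: "x_odd c \<Longrightarrow> beval c (-x) y = - beval c x y"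
  unfolding beval_def x_odd_def by (subst sum_negf[symmetric], rule sum.cong) auto

lemma x_odd_bdx_if_x_even: "x_even c \<Longrightarrow> x_odd (bdx c)"
  by (auto simp: x_even_def x_odd_def bdx_def)

lemma x_even_bdy_if_x_even: "x_even c \<Longrightarrow> x_even (bdy c)"
  by (auto simp: x_even_def bdy_def)

lemma x_even_bdx_if_x_odd: "x_odd c \<Longrightarrow> x_even (bdx c)"
  by (auto simp: x_even_def x_odd_def bdx_def)

lemma x_odd_bdy_if_x_odd: "x_odd c \<Longrightarrow> x_odd (bdy c)"
  by (auto simp: x_odd_def bdy_def)

lemma jacobian_trace_det_eq_0_if_x_parity:
  assumes p: "is_bpoly p" "order_gt_1 p" "x_even p"
    and q: "is_bpoly q" "order_gt_1 q" "x_odd q"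
    and jac: "jacobian_map (plus_x p) (plus_y q)"
  shows "beval (bdx p) x y + beval (bdy q) x y = 0"
    and "beval (bdx p) x y * beval (bdx p) x y + beval (bdy p) x y * beval (bdx q) x y = 0"
proof -
  define a b c d where "a = beval (bdx p) x y" and "b = beval (bdy p) x y"
    and "c = beval (bdx q) x y" and "d = beval (bdy q) x y"
  have h1: "(a + 1) * (d + 1) - b * c = 1"
    using jacobian_plus_xy_eq_1[OF p(1,2) q(1,2) jac] by (simp add: a_def b_def c_def d_def)
  have h2: "(- a + 1) * (- d + 1) - b * c = 1"
    using jacobian_plus_xy_eq_1[OF p(1,2) q(1,2) jac, of "-x" y]
    by (simp add: a_def b_def c_def d_def beval_neg_x_if_x_odd beval_neg_x_if_x_even
        x_odd_bdx_if_x_even x_even_bdy_if_x_even x_even_bdx_if_x_odd x_odd_bdy_if_x_odd p q)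
  have "2 * (a + d) = ((a + 1) * (d + 1) - b * c) - ((- a + 1) * (- d + 1) - b * c)"
    by (simp add: algebra_simps)
  then have trace: "a + d = 0"
    using h1 h2 by simp
  have "a * (a + d) = ((a + 1) * (d + 1) - b * c) - 1 - (a + d) + (a * a + b * c)"
    by (simp add: algebra_simps)
  with h1 trace show "a + d = 0" and "a * a + b * c = 0"
    by simp_all
qed

text \<open>The outer variable is y and the inner one x, so that map_poly pderiv is the
  derivative in x and pderiv the derivative in y.\<close>

definition poly2 :: "bpoly \<Rightarrow> real poly poly" where
  "poly2 c = (\<Sum>m\<in>{m. c m \<noteq> 0}. monom (monom (c m) (fst m)) (snd m))"

lemma coeff_coeff_poly2:
  assumes "is_bpoly c"
  shows "coeff (coeff (poly2 c) j) i = c (i,j)"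
proof -
  have "coeff (coeff (poly2 c) j) i = (\<Sum>m\<in>{m. c m \<noteq> 0}. if m = (i,j) then c m else 0)"
    unfolding poly2_def coeff_sum by (rule sum.cong) (auto simp: coeff_monom)
  then show ?thesis
    using assms by (simp add: is_bpoly_def)
qed

lemma poly2_eq_0_iff:
  assumes "is_bpoly c"
  shows "poly2 c = 0 \<longleftrightarrow> c = (\<lambda>_. 0)"
proof
  assume "poly2 c = 0"
  then show "c = (\<lambda>_. 0)"
    using coeff_coeff_poly2[OF assms] by (auto simp: fun_eq_iff)
qed (simp add: poly2_def)

lemma poly_poly2: "poly (poly (poly2 c) [:y:]) x = beval c x y"
  unfolding poly2_def beval_def poly_sum
  by (rule sum.cong) (simp_all add: poly_monom mult_ac)

lemma poly2_bdx:
  assumes "is_bpoly c"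
  shows "poly2 (bdx c) = map_poly pderiv (poly2 c)"
  by (intro poly_eqI) (simp add: coeff_coeff_poly2[OF is_bpoly_bdx[OF assms]]
      coeff_coeff_poly2[OF assms] coeff_map_poly coeff_pderiv, simp add: bdx_def)

lemma poly2_bdy:
  assumes "is_bpoly c"
  shows "poly2 (bdy c) = pderiv (poly2 c)"
  by (intro poly_eqI) (simp add: coeff_coeff_poly2[OF is_bpoly_bdy[OF assms]]
      coeff_coeff_poly2[OF assms] coeff_pderiv_poly, simp add: bdy_def)

lemma beval_eq_sum_if_x_only:
  assumes c: "is_bpoly c" "order_gt_1 c" and x_only: "\<And>i j. j \<noteq> 0 \<Longrightarrow> c (i,j) = 0"
  obtains N where "\<And>x y. beval c x y = (\<Sum>i\<in>{2..N}. c (i,0) * x ^ i)"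
proof -
  let ?S = "{m. c m \<noteq> 0}"
  define N where "N = Max (fst ` ?S)"
  have "finite ?S"
    using c by (simp add: is_bpoly_def)
  have S: "?S \<subseteq> (\<lambda>i. (i, 0)) ` {2..N}"
  proof
    fix m
    assume m: "m \<in> ?S"
    obtain i j where ij: "m = (i, j)"
      by (cases m)
    have "j = 0"
      using m ij x_only by auto
    moreover have "2 \<le> i"
      using m ij c(2) \<open>j = 0\<close> unfolding order_gt_1_def by (metis add_0_right mem_Collect_eq)
    moreover have "i \<le> N"
      unfolding N_def using \<open>finite ?S\<close> m ij by (intro Max_ge) force+
    ultimately show "m \<in> (\<lambda>i. (i, 0)) ` {2..N}"
      using ij by auto
  qed
  have "beval c x y = (\<Sum>m\<in>(\<lambda>i. (i, 0)) ` {2..N}. c m * x ^ fst m * y ^ snd m)" for x y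
    using S by (intro beval_eq_sum_superset) auto
  also have "\<dots> x y = (\<Sum>i\<in>{2..N}. c (i,0) * x ^ i)" for x y
    by (subst sum.reindex) (auto simp: inj_on_def)
  finally show ?thesis
    using that by blast
qed

lemma nonlin_plus_x: "order_gt_1 p \<Longrightarrow> nonlin (plus_x p) = p"
  by (auto simp: fun_eq_iff nonlin_def plus_x_def order_gt_1D)

lemma nonlin_plus_y: "order_gt_1 q \<Longrightarrow> nonlin (plus_y q) = q"
  by (auto simp: fun_eq_iff nonlin_def plus_y_def order_gt_1D)

lemma shear_map_if_x_only:
  assumes "is_bpoly q" "order_gt_1 q" "\<And>i j. j \<noteq> 0 \<Longrightarrow> q (i,j) = 0"
  shows "shear_map (plus_x (\<lambda>_. 0)) (plus_y q)"
proof -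
  obtain N where N: "\<And>x y. beval q x y = (\<Sum>i\<in>{2..N}. q (i,0) * x ^ i)"
    using beval_eq_sum_if_x_only assms by blast
  have zero: "order_gt_1 (\<lambda>_. 0)"
    by (simp add: order_gt_1_def)
  show ?thesis
    unfolding shear_map_def nonlin_plus_x[OF zero] nonlin_plus_y[OF assms(2)]
  proof (intro exI conjI allI)
    show "(1::real, 0::real) \<noteq> (0, 0)"
      by simp
    show "beval (\<lambda>_. 0) x y = (\<Sum>i\<in>{2..N}. 0 * (1 * x + 0 * y) ^ i)"
     and "beval q x y = (\<Sum>i\<in>{2..N}. q (i,0) * (1 * x + 0 * y) ^ i)" for x y
      by (simp_all add: N beval_def[of "\<lambda>_. 0"])
  qed
qed

lemma bdx_eq_0D:
  assumes "bdx c = (\<lambda>_. 0)" and "i \<noteq> 0"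
  shows "c (i,j) = 0"
proof -
  obtain i' where "i = Suc i'"
    using assms(2) not0_implies_Suc by blast
  then show ?thesis
    using fun_cong[OF assms(1), of "(i', j)"] by (simp add: bdx_def)
qed

lemma bdy_eq_0D:
  assumes "bdy c = (\<lambda>_. 0)" and "j \<noteq> 0"
  shows "c (i,j) = 0"
proof -
  obtain j' where "j = Suc j'"
    using assms(2) not0_implies_Suc by blast
  then show ?thesis
    using fun_cong[OF assms(1), of "(i, j')"] by (simp add: bdy_def)
qed

lemma eq_0_if_bdx_bdy_eq_0:
  assumes "order_gt_1 c" "bdx c = (\<lambda>_. 0)" "bdy c = (\<lambda>_. 0)"
  shows "c = (\<lambda>_. 0)"
proof
  fix m :: "nat \<times> nat"
  obtain i j where m: "m = (i, j)"
    by (cases m)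
  show "c m = 0"
  proof (cases "i = 0 \<and> j = 0")
    case True
    then show ?thesis
      using m order_gt_1D[OF assms(1), of 0 0] by simp
  next
    case False
    then show ?thesis
      using m bdx_eq_0D[OF assms(2)] bdy_eq_0D[OF assms(3)] by auto
  qed
qed

lemma derivatives_vanish_if_nilpotent_jacobian_x_even:
  assumes p: "is_bpoly p" "x_even p" and q: "is_bpoly q"
    and trace: "\<And>x y. beval (bdx p) x y + beval (bdy q) x y = 0"
    and det: "\<And>x y. beval (bdx p) x y * beval (bdx p) x y + beval (bdy p) x y * beval (bdx q) x y = 0"
  shows "bdx p = (\<lambda>_. 0)" and "bdy q = (\<lambda>_. 0)" and "bdy p = (\<lambda>_. 0) \<or> bdx q = (\<lambda>_. 0)"
proof -
  define P Q where "P = poly2 p" and "Q = poly2 q"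
  note poly2_derivs = poly2_bdx[OF p(1), folded P_def] poly2_bdy[OF p(1), folded P_def]
    poly2_bdx[OF q, folded Q_def] poly2_bdy[OF q, folded Q_def]
  have trace': "map_poly pderiv P + pderiv Q = 0"
    by (rule poly_poly_const_eq_0_imp_eq_0) (simp add: poly2_derivs[symmetric] poly_poly2 trace)
  have det': "map_poly pderiv P * map_poly pderiv P + pderiv P * map_poly pderiv Q = 0"
    by (rule poly_poly_const_eq_0_imp_eq_0) (simp add: poly2_derivs[symmetric] poly_poly2 det)
  have "coeff (coeff P j) 1 = 0" for j
    using p coeff_coeff_poly2[OF p(1), of j 1] by (auto simp: P_def x_even_def)
  then have Px: "map_poly pderiv P = 0"
    using map_poly_pderiv_eq_0_if_nilpotent_jacobian[OF trace' det'] by blast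
  moreover from trace' Px have "pderiv Q = 0"
    by simp
  moreover from det' Px have "pderiv P = 0 \<or> map_poly pderiv Q = 0"
    by simp
  ultimately show "bdx p = (\<lambda>_. 0)" and "bdy q = (\<lambda>_. 0)" and "bdy p = (\<lambda>_. 0) \<or> bdx q = (\<lambda>_. 0)"
    using poly2_eq_0_iff is_bpoly_bdx is_bpoly_bdy p(1) q by (metis poly2_derivs)+
qed

lemma shear_map_if_x_even_x_odd:
  assumes p: "is_bpoly p" "order_gt_1 p" "x_even p"
    and q: "is_bpoly q" "order_gt_1 q" "x_odd q"
    and jac: "jacobian_map (plus_x p) (plus_y q)"
  shows "shear_map (plus_x p) (plus_y q)"
proof -
  have px: "bdx p = (\<lambda>_. 0)" and qy: "bdy q = (\<lambda>_. 0)"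
    and py_or_qx: "bdy p = (\<lambda>_. 0) \<or> bdx q = (\<lambda>_. 0)"
    using derivatives_vanish_if_nilpotent_jacobian_x_even[OF p(1,3) q(1) jacobian_trace_det_eq_0_if_x_parity[OF p q jac]]
    by blast+
  from py_or_qx show ?thesis
  proof
    assume "bdy p = (\<lambda>_. 0)"
    then have "p = (\<lambda>_. 0)"
      using eq_0_if_bdx_bdy_eq_0 p(2) px by blast
    then show ?thesis
      using shear_map_if_x_only[OF q(1,2)] bdy_eq_0D[OF qy] by blast
  next
    assume "bdx q = (\<lambda>_. 0)"
    then have "q = (\<lambda>_. 0)"
      using eq_0_if_bdx_bdy_eq_0 q(2) qy by blast
    have "shear_map (plus_x (\<lambda>_. 0)) (plus_y (btranspose p))"
    proof (rule shear_map_if_x_only)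
      show "is_bpoly (btranspose p)" and "order_gt_1 (btranspose p)"
        using p(1,2) by (simp_all add: is_bpoly_btranspose order_gt_1_btranspose)
      show "btranspose p (i, j) = 0" if "j \<noteq> 0" for i j
        using bdx_eq_0D[OF px that] by (simp add: btranspose_def)
    qed
    then have "shear_map (btranspose (plus_y (btranspose p))) (btranspose (plus_x (\<lambda>_. 0)))"
      by (rule shear_map_btranspose)
    moreover have "plus_x (\<lambda>_. 0) = btranspose (plus_y (\<lambda>_. 0))"
      using plus_x_btranspose[of "\<lambda>_. 0"] by simp
    ultimately show ?thesis
      using \<open>q = (\<lambda>_. 0)\<close> by (simp add: plus_y_btranspose)
  qed
qed

theorem corollary2:
  fixes p q :: bpoly
  assumes "is_bpoly p" and "is_bpoly q"
    and "jacobian_map (plus_x p) (plus_y q)"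
    and "order_gt_1 p" and "order_gt_1 q"
    and "(x_even p \<and> x_odd q) \<or> (y_odd p \<and> y_even q)"
  shows "shear_map (plus_x p) (plus_y q)"
  using assms(6)
proof
  assume "x_even p \<and> x_odd q"
  then show ?thesis
    using shear_map_if_x_even_x_odd assms(1-5) by blast
next
  assume "y_odd p \<and> y_even q"
  then have "shear_map (plus_x (btranspose q)) (plus_y (btranspose p))"
    using assms(1,2,4,5) jacobian_map_btranspose[OF assms(3)]
    by (intro shear_map_if_x_even_x_odd)
      (simp_all add: is_bpoly_btranspose order_gt_1_btranspose x_even_btranspose
        x_odd_btranspose plus_x_btranspose plus_y_btranspose)
  then have "shear_map (btranspose (plus_y (btranspose p))) (btranspose (plus_x (btranspose q)))"
    by (rule shear_map_btranspose)
  then show ?thesis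
    by (simp add: plus_x_btranspose plus_y_btranspose)
qed

end
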